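(* Let $\xi>0$ and consider the reduced problem $\dot y=e^z-1$, $\dot z=\xi+e^z(\xi z-\xi y-\xi)$ (i.e. with $\alpha=\xi$), compactified at infinity. There is a unique heteroclinic connection between the points at infinity $Q^3$ and $Q^6$ on the critical manifold; it runs through the manifolds $W^{c,s}$ and $W^{c,u}$ and coincides with the level set $\{H=1\}$ of $H(y,z)=-e^{-\xi y}(\xi y-\xi z+\xi+1-\xi e^{-z})+1$. This set can be written as the union of two graphs $z=z^\pm(y)$, $y\ge -1/\xi$, such that $z^-(y)$ approaches $Q^3$ with $z^-=O(y)$ and $z^+(y)$ approaches $Q^6$ with $z^+=O(\ln y)$ as $y\to\infty$.
   Context: Points at infinity: with $y_3=y/z$, $w_3=1/z$ ($z>0$), $Q^3=(w_3,y_3)=(0,1)$ (for $\alpha=\xi$); with $\rho=-1/z$, $\eta=e^{-z}/y$ ($z<0$, $y>0$), $Q^6=(\rho,\eta)=(0,1)$. $W^{c,s}$ is the unique center-stable manifold of $Q^3$ and $W^{c,u}$ the unique center-unstable manifold of $Q^6$ for the compactified, time-desingularized reduced problem. *)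

theory Defs
  imports "HOL-Analysis.Analysis" "HOL-Library.Landau_Symbols"
begin

definition H :: "real \<Rightarrow> real \<Rightarrow> real \<Rightarrow> real" where
  "H xi y z = - exp (- xi * y) * (xi * y - xi * z + xi + 1 - xi * exp (- z)) + 1"

definition time_int :: "ereal \<Rightarrow> ereal \<Rightarrow> real set" where
  "time_int a b = {t. a < ereal t \<and> ereal t < b}"

definition upper_end :: "ereal \<Rightarrow> real filter" where
  "upper_end b = (if b = \<infinity> then at_top else at_left (real_of_ereal b))"

definition lower_end :: "ereal \<Rightarrow> real filter" where
  "lower_end a = (if a = -\<infinity> then at_bot else at_right (real_of_ereal a))"

definition is_solution :: "real \<Rightarrow> ereal \<Rightarrow> ereal \<Rightarrow> (real \<Rightarrow> real) \<Rightarrow> (real \<Rightarrow> real) \<Rightarrow> bool" where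
  "is_solution xi a b y z \<longleftrightarrow> a < b \<and>
     (\<forall>t\<in>time_int a b.
        (y has_real_derivative (exp (z t) - 1)) (at t) \<and>
        (z has_real_derivative (xi + exp (z t) * (xi * z t - xi * y t - xi))) (at t))"

text \<open>Convergence to Q3 = (w3,y3) = (0,1) in the chart y3 = y/z, w3 = 1/z (z > 0).\<close>
definition tends_to_Q3 :: "'a filter \<Rightarrow> ('a \<Rightarrow> real) \<Rightarrow> ('a \<Rightarrow> real) \<Rightarrow> bool" where
  "tends_to_Q3 F y z \<longleftrightarrow> eventually (\<lambda>t. z t > 0) F \<and>
     ((\<lambda>t. 1 / z t) \<longlongrightarrow> 0) F \<and> ((\<lambda>t. y t / z t) \<longlongrightarrow> 1) F"

text \<open>Convergence to Q6 = (rho,eta) = (0,1) in the chart rho = -1/z, eta = e^{-z}/y (z < 0, y > 0).\<close>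
definition tends_to_Q6 :: "'a filter \<Rightarrow> ('a \<Rightarrow> real) \<Rightarrow> ('a \<Rightarrow> real) \<Rightarrow> bool" where
  "tends_to_Q6 F y z \<longleftrightarrow> eventually (\<lambda>t. z t < 0 \<and> y t > 0) F \<and>
     ((\<lambda>t. - 1 / z t) \<longlongrightarrow> 0) F \<and> ((\<lambda>t. exp (- z t) / y t) \<longlongrightarrow> 1) F"

definition heteroclinic :: "real \<Rightarrow> ereal \<Rightarrow> ereal \<Rightarrow> (real \<Rightarrow> real) \<Rightarrow> (real \<Rightarrow> real) \<Rightarrow> bool" where
  "heteroclinic xi a b y z \<longleftrightarrow> is_solution xi a b y z \<and>
     tends_to_Q6 (lower_end a) y z \<and> tends_to_Q3 (upper_end b) y z"

definition orbit :: "ereal \<Rightarrow> ereal \<Rightarrow> (real \<Rightarrow> real) \<Rightarrow> (real \<Rightarrow> real) \<Rightarrow> (real \<times> real) set" where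
  "orbit a b y z = (\<lambda>t. (y t, z t)) ` time_int a b"

end

theory Submission
  imports Defs "HOL-Real_Asymp.Real_Asymp"
begin

text \<open>
  H is a first integral of the reduced problem and tends to 1 at Q3, so every heteroclinic
  connection lies in the level set {H = 1}. That level set is the graph
  y = z + e^(-z) - 1 - 1/xi over the whole z-axis, and along a connection from Q6
  (z \<rightarrow> -\<infinity>) to Q3 (z \<rightarrow> \<infinity>) the coordinate z takes every real value, so the orbit is
  the entire level set; z = - ln (- t) gives one such connection. Since z \<mapsto> y decreases
  on z \<le> 0 and increases on z \<ge> 0 with minimum -1/xi, its inverse branches on z \<ge> 0 and
  z \<le> 0 are z^- and z^+, and their growth O(y) and O(ln y) is already forced by the chart
  coordinates of Q3 and Q6.
\<close>

section \<open>Inverses of increasing functions on half-lines\<close>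

lemma strict_mono_on_atLeast_DERIV_pos:
  fixes f f' :: "real \<Rightarrow> real"
  assumes cont: "continuous_on {a..} f"
    and deriv: "\<And>x. a < x \<Longrightarrow> (f has_real_derivative f' x) (at x)"
    and pos: "\<And>x. a < x \<Longrightarrow> f' x > 0"
  shows "strict_mono_on {a..} f"
proof (rule strict_mono_onI)
  fix x y assume x: "x \<in> {a..}" and "y \<in> {a..}" and xy: "x < y"
  show "f x < f y"
  proof (rule DERIV_pos_imp_increasing_open[OF xy])
    show "\<exists>d. (f has_real_derivative d) (at t) \<and> d > 0" if "x < t" for t
    proof -
      have "a < t" using x that by simp
      then show ?thesis using deriv pos by blast
    qed
    show "continuous_on {x..y} f"
      using x by (intro continuous_on_subset[OF cont]) auto
  qed
qed

lemma image_atLeast_strict_mono_on: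
  fixes f :: "real \<Rightarrow> real"
  assumes cont: "continuous_on {a..} f" and mono: "strict_mono_on {a..} f"
    and lim: "filterlim f at_top at_top"
  shows "f ` {a..} = {f a..}"
proof
  show "f ` {a..} \<subseteq> {f a..}"
    using strict_mono_on_leD[OF mono] by auto
  show "{f a..} \<subseteq> f ` {a..}"
  proof
    fix y assume y: "y \<in> {f a..}"
    have "eventually (\<lambda>x. a \<le> x \<and> y \<le> f x) at_top"
      using lim by (simp add: filterlim_at_top eventually_conj)
    then obtain B where B: "a \<le> B" "y \<le> f B"
      unfolding eventually_at_top_linorder by (meson order_refl)
    have "continuous_on {a..B} f" using cont by (rule continuous_on_subset) auto
    then obtain x where "a \<le> x" "f x = y" using IVT'[of f a y B] y B by auto
    then show "y \<in> f ` {a..}" by auto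
  qed
qed

lemma continuous_on_the_inv_into_atLeast:
  fixes f :: "real \<Rightarrow> real"
  assumes cont: "continuous_on {a..} f" and mono: "strict_mono_on {a..} f"
    and lim: "filterlim f at_top at_top"
  shows "continuous_on {f a..} (the_inv_into {a..} f)"
  unfolding continuous_on_eq_continuous_within
proof
  fix y assume y: "y \<in> {f a..}"
  let ?h = "the_inv_into {a..} f"
  have inj: "inj_on f {a..}" using mono by (rule strict_mono_on_imp_inj_on)
  have img: "f ` {a..} = {f a..}" using cont mono lim by (rule image_atLeast_strict_mono_on)
  define B where "B = ?h (y + 1)"
  have B: "a \<le> B" "f B = y + 1"
    using y img the_inv_into_into[OF inj, of "y + 1"] f_the_inv_into_f[OF inj, of "y + 1"]
    by (auto simp: B_def)
  have "f ` {a..B} = {f a..y + 1}"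
  proof
    show "f ` {a..B} \<subseteq> {f a..y + 1}"
    proof
      fix w assume "w \<in> f ` {a..B}"
      then obtain x where "a \<le> x" "x \<le> B" "w = f x" by auto
      then show "w \<in> {f a..y + 1}"
        using strict_mono_on_leD[OF mono, of a x] strict_mono_on_leD[OF mono, of x B] B by auto
    qed
    show "{f a..y + 1} \<subseteq> f ` {a..B}"
    proof
      fix w assume w: "w \<in> {f a..y + 1}"
      then have "w \<in> f ` {a..}" using img by simp
      then obtain x where x: "a \<le> x" "w = f x" by auto
      have "\<not> B < x"
      proof
        assume "B < x"
        then have "f B < f x" using x B by (intro strict_mono_onD[OF mono]) auto
        with x w B show False by simp
      qed
      with x show "w \<in> f ` {a..B}" by auto
    qed
  qed
  moreover have "continuous_on (f ` {a..B}) ?h"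
    by (rule continuous_on_inv) (auto intro: continuous_on_subset[OF cont] the_inv_into_f_f[OF inj])
  ultimately have "continuous (at y within {f a..y + 1}) ?h"
    using y by (simp add: continuous_on_eq_continuous_within)
  moreover have "at y within {f a..y + 1} = at y within {f a..}"
    by (rule at_within_nhd[where S = "{..<y + 1}"]) auto
  ultimately show "continuous (at y within {f a..}) ?h" by simp
qed

lemma filterlim_the_inv_into_atLeast:
  fixes f :: "real \<Rightarrow> real"
  assumes cont: "continuous_on {a..} f" and mono: "strict_mono_on {a..} f"
    and lim: "filterlim f at_top at_top"
  shows "filterlim (the_inv_into {a..} f) at_top at_top"
proof (rule filterlim_at_top_at_top[where Q = "\<lambda>y. f a \<le> y" and P = "\<lambda>x. a \<le> x" and g = f])
  let ?h = "the_inv_into {a..} f"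
  have inj: "inj_on f {a..}" using mono by (rule strict_mono_on_imp_inj_on)
  have img: "f ` {a..} = {f a..}" using cont mono lim by (rule image_atLeast_strict_mono_on)
  have h: "a \<le> ?h y" "f (?h y) = y" if "f a \<le> y" for y
    using that img the_inv_into_into[OF inj, of y] f_the_inv_into_f[OF inj, of y] by auto
  show "?h y \<le> ?h y'" if "f a \<le> y" "f a \<le> y'" "y \<le> y'" for y y'
  proof (rule ccontr)
    assume "\<not> ?h y \<le> ?h y'"
    then have "f (?h y') < f (?h y)" using h that by (intro strict_mono_onD[OF mono]) auto
    with h that show False by simp
  qed
  show "?h (f x) = x" if "a \<le> x" for x
    using the_inv_into_f_f[OF inj] that by simp
  show "f a \<le> f x" if "a \<le> x" for x
    using strict_mono_on_leD[OF mono] that by simp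
qed (simp_all add: eventually_ge_at_top)

lemma tendsto_right_inverse_at_top:
  fixes f g :: "real \<Rightarrow> real"
  assumes "filterlim g at_top at_top" and "eventually (\<lambda>p. f (g p) = p) at_top"
    and "((\<lambda>x. \<phi> (f x) x) \<longlongrightarrow> L) at_top"
  shows "((\<lambda>p. \<phi> p (g p)) \<longlongrightarrow> L) at_top"
proof -
  have "((\<lambda>p. \<phi> (f (g p)) (g p)) \<longlongrightarrow> L) at_top"
    using filterlim_compose[OF assms(3,1)] .
  moreover have "eventually (\<lambda>p. \<phi> (f (g p)) (g p) = \<phi> p (g p)) at_top"
    using assms(2) by eventually_elim simp
  ultimately show ?thesis by (simp add: tendsto_cong)
qed

section \<open>The level set {H = 1}\<close>

definition level_one_y :: "real \<Rightarrow> real \<Rightarrow> real" where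
  "level_one_y xi z = z + exp (- z) - 1 - 1 / xi"

lemma H_eq_1_iff:
  assumes "xi > 0"
  shows "H xi p q = 1 \<longleftrightarrow> p = level_one_y xi q"
proof -
  have "H xi p q = 1 \<longleftrightarrow> xi * p - xi * q + xi + 1 - xi * exp (- q) = 0"
    by (simp add: H_def)
  also have "\<dots> \<longleftrightarrow> p = level_one_y xi q"
    using assms by (auto simp: level_one_y_def field_simps)
  finally show ?thesis .
qed

lemma level_one_y_0 [simp]: "level_one_y xi 0 = - 1 / xi"
  by (simp add: level_one_y_def)

lemma continuous_on_level_one_y [continuous_intros]:
  "continuous_on A f \<Longrightarrow> continuous_on A (\<lambda>x. level_one_y xi (f x))"
  unfolding level_one_y_def by (intro continuous_intros)

lemma strict_mono_on_level_one_y: "strict_mono_on {0..} (level_one_y xi)"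
proof (rule strict_mono_on_atLeast_DERIV_pos)
  show "continuous_on {0..} (level_one_y xi)"
    by (intro continuous_intros)
  show "(level_one_y xi has_real_derivative 1 - exp (- x)) (at x)" for x
    unfolding level_one_y_def by (auto intro!: derivative_eq_intros)
  show "1 - exp (- x) > 0" if "0 < x" for x :: real
    using that by simp
qed

lemma strict_mono_on_level_one_y_minus: "strict_mono_on {0..} (\<lambda>w. level_one_y xi (- w))"
proof (rule strict_mono_on_atLeast_DERIV_pos)
  show "continuous_on {0..} (\<lambda>w. level_one_y xi (- w))"
    by (intro continuous_intros)
  show "((\<lambda>w. level_one_y xi (- w)) has_real_derivative exp x - 1) (at x)" for x
    unfolding level_one_y_def by (auto intro!: derivative_eq_intros)
  show "exp x - 1 > 0" if "0 < x" for x :: real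
    using that by simp
qed

lemma level_one_y_ge: "- 1 / xi \<le> level_one_y xi q"
  using exp_ge_add_one_self[of "- q"] by (simp add: level_one_y_def)

lemma H_first_integral:
  assumes "(y has_real_derivative (exp (z t) - 1)) (at t)"
    and "(z has_real_derivative (xi + exp (z t) * (xi * z t - xi * y t - xi))) (at t)"
  shows "((\<lambda>t. H xi (y t) (z t)) has_real_derivative 0) (at t)"
  unfolding H_def
  by (rule derivative_eq_intros assms refl | simp)+ (simp add: field_simps exp_minus)

section \<open>Approach to the points at infinity\<close>

lemma tends_to_Q3_imp_filterlim:
  assumes "tends_to_Q3 F y z"
  shows "filterlim z at_top F" and "filterlim y at_top F"
proof -
  have z_pos: "eventually (\<lambda>t. z t > 0) F" and yz: "((\<lambda>t. y t / z t) \<longlongrightarrow> 1) F"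
    using assms by (auto simp: tends_to_Q3_def)
  have "filterlim (\<lambda>t. inverse (1 / z t)) at_top F"
    using assms z_pos unfolding tends_to_Q3_def
    by (intro filterlim_inverse_at_top) (auto elim!: eventually_mono)
  then show z: "filterlim z at_top F" by simp
  have "filterlim (\<lambda>t. y t / z t * z t) at_top F"
    by (rule filterlim_tendsto_pos_mult_at_top[OF yz _ z]) simp
  moreover have "eventually (\<lambda>t. y t / z t * z t = y t) F"
    using z_pos by (auto elim!: eventually_mono)
  ultimately show "filterlim y at_top F"
    by (simp add: filterlim_cong)
qed

lemma tends_to_Q6_imp_filterlim:
  assumes "tends_to_Q6 F y z"
  shows "filterlim (\<lambda>t. - z t) at_top F"
proof -
  have "filterlim (\<lambda>t. inverse (- 1 / z t)) at_top F"
    using assms unfolding tends_to_Q6_def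
    by (intro filterlim_inverse_at_top) (auto elim!: eventually_mono intro: divide_neg_neg)
  then show ?thesis by simp
qed

lemma tendsto_H_tends_to_Q3:
  assumes xi: "xi > 0" and Q3: "tends_to_Q3 F y z"
  shows "((\<lambda>t. H xi (y t) (z t)) \<longlongrightarrow> 1) F"
proof -
  have z: "filterlim z at_top F" and y: "filterlim y at_top F"
    using Q3 by (rule tends_to_Q3_imp_filterlim)+
  have "((\<lambda>x. exp (- xi * x) * x) \<longlongrightarrow> 0) at_top" "((\<lambda>x. exp (- xi * x)) \<longlongrightarrow> 0) at_top"
    using xi by real_asymp+
  then have E1: "((\<lambda>t. exp (- xi * y t) * y t) \<longlongrightarrow> 0) F"
    and E0: "((\<lambda>t. exp (- xi * y t)) \<longlongrightarrow> 0) F"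
    by (auto intro: filterlim_compose[OF _ y])
  have "((\<lambda>x::real. exp (- x)) \<longlongrightarrow> 0) at_top" by real_asymp
  then have Ez: "((\<lambda>t. exp (- z t)) \<longlongrightarrow> 0) F" by (rule filterlim_compose[OF _ z])
  have y_pos: "eventually (\<lambda>t. y t > 0) F"
    using y by (simp add: filterlim_at_top_dense)
  have "((\<lambda>t. inverse (y t / z t)) \<longlongrightarrow> inverse 1) F"
    using Q3 by (intro tendsto_inverse) (simp_all add: tends_to_Q3_def)
  then have zy: "((\<lambda>t. z t / y t) \<longlongrightarrow> 1) F" by simp
  have "((\<lambda>t. 1 - xi * (exp (- xi * y t) * y t) * (1 - z t / y t) - (xi + 1) * exp (- xi * y t)
      + xi * exp (- xi * y t) * exp (- z t)) \<longlongrightarrow> 1 - xi * 0 * (1 - 1) - (xi + 1) * 0 + xi * 0 * 0) F"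
    by (intro tendsto_intros E1 E0 Ez zy)
  moreover have "eventually (\<lambda>t. 1 - xi * (exp (- xi * y t) * y t) * (1 - z t / y t)
      - (xi + 1) * exp (- xi * y t) + xi * exp (- xi * y t) * exp (- z t) = H xi (y t) (z t)) F"
    using y_pos by eventually_elim (simp add: H_def field_simps)
  ultimately show ?thesis by (simp add: tendsto_cong)
qed

lemma tends_to_Q3_imp_bigo:
  assumes "tends_to_Q3 F y z"
  shows "z \<in> O[F](y)"
proof (rule bigoI_tendsto)
  have "((\<lambda>t. inverse (y t / z t)) \<longlongrightarrow> inverse 1) F"
    using assms by (intro tendsto_inverse) (simp_all add: tends_to_Q3_def)
  then show "((\<lambda>t. z t / y t) \<longlongrightarrow> 1) F" by simp
  have "eventually (\<lambda>t. y t > 0) F"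
    using tends_to_Q3_imp_filterlim(2)[OF assms] by (simp add: filterlim_at_top_dense)
  then show "eventually (\<lambda>t. y t \<noteq> 0) F"
    by eventually_elim simp
qed

text \<open>Near Q6 we have - z = ln y + ln (e^(-z) / y) with the last term tending to 0.\<close>

lemma tends_to_Q6_imp_bigo_ln:
  assumes Q6: "tends_to_Q6 F y z"
  shows "z \<in> O[F](\<lambda>t. ln (y t))"
proof (rule bigoI_tendsto)
  define r where "r t = exp (- z t) / y t" for t
  have r: "(r \<longlongrightarrow> 1) F"
    using Q6 by (simp add: tends_to_Q6_def r_def[abs_def])
  have y_pos: "eventually (\<lambda>t. y t > 0) F"
    using Q6 by (auto simp: tends_to_Q6_def elim: eventually_mono)
  have exp_z: "filterlim (\<lambda>t. exp (- z t)) at_top F"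
    using tends_to_Q6_imp_filterlim[OF Q6] by (rule filterlim_compose[OF exp_at_top])
  have "((\<lambda>t. inverse (r t)) \<longlongrightarrow> 1) F"
    using tendsto_inverse[OF r] by simp
  then have "filterlim (\<lambda>t. inverse (r t) * exp (- z t)) at_top F"
    by (rule filterlim_tendsto_pos_mult_at_top[OF _ _ exp_z]) simp
  moreover have "eventually (\<lambda>t. inverse (r t) * exp (- z t) = y t) F"
    using y_pos by eventually_elim (simp add: r_def)
  ultimately have "filterlim y at_top F"
    by (simp add: filterlim_cong)
  then have ln_y: "filterlim (\<lambda>t. ln (y t)) at_top F"
    by (rule filterlim_compose[OF ln_at_top])
  have "((\<lambda>t. - (1 + ln (r t) * inverse (ln (y t)))) \<longlongrightarrow> - (1 + ln 1 * 0)) F"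
    by (intro tendsto_intros r tendsto_inverse_0_at_top ln_y) simp
  moreover have "eventually (\<lambda>t. - (1 + ln (r t) * inverse (ln (y t))) = z t / ln (y t)) F"
    using y_pos ln_y[unfolded filterlim_at_top_dense, rule_format, of 0]
    by eventually_elim (simp add: r_def ln_div field_simps)
  ultimately show "((\<lambda>t. z t / ln (y t)) \<longlongrightarrow> - 1) F"
    by (simp add: tendsto_cong)
  have "eventually (\<lambda>t. ln (y t) > 0) F"
    using ln_y by (simp add: filterlim_at_top_dense)
  then show "eventually (\<lambda>t. ln (y t) \<noteq> 0) F"
    by eventually_elim simp
qed

section \<open>Heteroclinic connections\<close>

lemma open_time_int: "open (time_int a b)"
proof -
  have "time_int a b = {t. a < ereal t} \<inter> {t. ereal t < b}"
    unfolding time_int_def by auto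
  then show ?thesis
    by (simp add: open_Int open_Collect_less continuous_on_ereal)
qed

lemma connected_time_int: "connected (time_int a b)"
  unfolding is_interval_connected_1[symmetric] is_interval_1
proof (intro ballI allI impI)
  fix u v x assume "u \<in> time_int a b" "v \<in> time_int a b" "u \<le> x \<and> x \<le> v"
  then have "a < ereal u" "ereal u \<le> ereal x" "ereal x \<le> ereal v" "ereal v < b"
    by (simp_all add: time_int_def)
  then show "x \<in> time_int a b"
    unfolding time_int_def by (blast intro: less_le_trans le_less_trans)
qed

lemma eventually_upper_end_time_int:
  assumes "a < b"
  shows "eventually (\<lambda>t. t \<in> time_int a b) (upper_end b)"
proof (cases b)
  case (real r)
  obtain s where s: "a < ereal s" "s < r" using ereal_dense2[OF assms[unfolded real]] by auto
  have "eventually (\<lambda>t. t \<in> {s<..<r}) (at_left r)" using s by (intro eventually_at_left_real)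
  then show ?thesis
    using real by (auto simp: upper_end_def time_int_def elim!: eventually_mono intro: order.strict_trans[OF s(1)])
next
  case PInf
  obtain s where s: "a < ereal s" using ereal_dense2[OF assms] by auto
  have "eventually (\<lambda>t. a < ereal t) at_top"
    using eventually_gt_at_top[of s] by eventually_elim (simp add: order.strict_trans[OF s])
  then show ?thesis
    using PInf by (simp add: upper_end_def time_int_def)
qed (use assms in simp)

lemma eventually_lower_end_time_int:
  assumes "a < b"
  shows "eventually (\<lambda>t. t \<in> time_int a b) (lower_end a)"
proof (cases a)
  case (real r)
  obtain s where s: "ereal s < b" "r < s" using ereal_dense2[OF assms[unfolded real]] by auto
  have "eventually (\<lambda>t. t \<in> {r<..<s}) (at_right r)" using s by (intro eventually_at_right_real)
  then show ?thesis
    using real by (auto simp: lower_end_def time_int_def elim!: eventually_mono intro: order.strict_trans[OF _ s(1)])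
next
  case MInf
  obtain s where s: "ereal s < b" using ereal_dense2[OF assms] by auto
  have "eventually (\<lambda>t. ereal t < b) at_bot"
    using eventually_gt_at_bot[of s] by eventually_elim (simp add: order.strict_trans[OF _ s])
  then show ?thesis
    using MInf by (simp add: lower_end_def time_int_def)
qed (use assms in simp)

text \<open>On the level set the z-equation reduces to z' = e^z, which is solved by z = - ln (- t).\<close>

lemma heteroclinic_explicit:
  assumes xi: "xi > 0"
  shows "heteroclinic xi (-\<infinity>) 0 (\<lambda>t. - ln (- t) - t - 1 - 1 / xi) (\<lambda>t. - ln (- t))"
proof -
  have "is_solution xi (-\<infinity>) 0 (\<lambda>t. - ln (- t) - t - 1 - 1 / xi) (\<lambda>t. - ln (- t))"
    unfolding is_solution_def time_int_def
  proof (intro conjI ballI)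
    fix t :: real assume "t \<in> {t. - \<infinity> < ereal t \<and> ereal t < 0}"
    then have t: "t < 0" by simp
    have exp_z: "exp (- ln (- t)) = - 1 / t" using t by (simp add: exp_minus inverse_eq_divide)
    show "((\<lambda>t. - ln (- t) - t - 1 - 1 / xi) has_real_derivative exp (- ln (- t)) - 1) (at t)"
      unfolding exp_z using t by (auto intro!: derivative_eq_intros simp: field_simps)
    show "((\<lambda>t. - ln (- t)) has_real_derivative xi + exp (- ln (- t)) *
        (xi * - ln (- t) - xi * (- ln (- t) - t - 1 - 1 / xi) - xi)) (at t)"
      unfolding exp_z using t xi by (auto intro!: derivative_eq_intros simp: field_simps)
  qed simp
  moreover have "tends_to_Q6 at_bot (\<lambda>t. - ln (- t) - t - 1 - 1 / xi) (\<lambda>t. - ln (- t))"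
    unfolding tends_to_Q6_def by (intro conjI eventually_conj; real_asymp)
  moreover have "tends_to_Q3 (at_left 0) (\<lambda>t. - ln (- t) - t - 1 - 1 / xi) (\<lambda>t. - ln (- t))"
    unfolding tends_to_Q3_def by (intro conjI; real_asymp)
  ultimately show ?thesis
    by (simp add: heteroclinic_def lower_end_def upper_end_def)
qed

lemma is_solution_continuous_on:
  assumes "is_solution xi a b y z"
  shows "continuous_on (time_int a b) z"
  using assms unfolding is_solution_def
  by (intro continuous_at_imp_continuous_on ballI) (blast intro: DERIV_isCont)

lemma heteroclinic_H_eq_1:
  assumes xi: "xi > 0" and het: "heteroclinic xi a b y z" and t: "t \<in> time_int a b"
  shows "H xi (y t) (z t) = 1"
proof -
  let ?S = "time_int a b" and ?H = "\<lambda>t. H xi (y t) (z t)"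
  have sol: "is_solution xi a b y z" and Q3: "tends_to_Q3 (upper_end b) y z"
    using het by (simp_all add: heteroclinic_def)
  have ab: "a < b" using sol by (simp add: is_solution_def)
  have dH: "(?H has_real_derivative 0) (at s)" if "s \<in> ?S" for s
    using sol that by (intro H_first_integral) (simp_all add: is_solution_def)
  then have "continuous_on ?S ?H"
    by (intro continuous_at_imp_continuous_on ballI) (blast intro: DERIV_isCont)
  then obtain c where c: "\<And>s. s \<in> ?S \<Longrightarrow> ?H s = c"
    using DERIV_zero_connected_constant[OF connected_time_int open_time_int finite.emptyI] dH
    by blast
  have "eventually (\<lambda>s. ?H s = c) (upper_end b)"
    using eventually_upper_end_time_int[OF ab] by (rule eventually_mono) (rule c)
  then have "((\<lambda>s. c) \<longlongrightarrow> 1) (upper_end b)"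
    using tendsto_H_tends_to_Q3[OF xi Q3] by (simp add: tendsto_cong)
  then have "c = 1"
    by (simp add: upper_end_def tendsto_const_iff)
  with c t show ?thesis by simp
qed

lemma heteroclinic_z_surj:
  assumes het: "heteroclinic xi a b y z"
  shows "z ` time_int a b = UNIV"
proof -
  let ?S = "time_int a b"
  have sol: "is_solution xi a b y z" and ab: "a < b"
    and Q6: "tends_to_Q6 (lower_end a) y z" and Q3: "tends_to_Q3 (upper_end b) y z"
    using het by (simp_all add: heteroclinic_def is_solution_def)
  have interval: "is_interval (z ` ?S)"
    unfolding is_interval_connected_1
    by (rule connected_continuous_image[OF is_solution_continuous_on[OF sol] connected_time_int])
  have below: "\<exists>t\<in>?S. z t \<le> q" for q
  proof -
    have "\<forall>Z. eventually (\<lambda>t. Z \<le> - z t) (lower_end a)"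
      using tends_to_Q6_imp_filterlim[OF Q6] by (simp add: filterlim_at_top)
    then have "eventually (\<lambda>t. z t \<le> q) (lower_end a)"
      by (force dest: spec[of _ "- q"])
    then have "eventually (\<lambda>t. t \<in> ?S \<and> z t \<le> q) (lower_end a)"
      using eventually_lower_end_time_int[OF ab] by (simp add: eventually_conj)
    moreover have "lower_end a \<noteq> bot" by (simp add: lower_end_def)
    ultimately show ?thesis by (auto dest: eventually_happens')
  qed
  have above: "\<exists>t\<in>?S. q \<le> z t" for q
  proof -
    have "eventually (\<lambda>t. t \<in> ?S \<and> q \<le> z t) (upper_end b)"
      using eventually_upper_end_time_int[OF ab] tends_to_Q3_imp_filterlim(1)[OF Q3]
      by (simp add: filterlim_at_top eventually_conj)
    moreover have "upper_end b \<noteq> bot" by (simp add: upper_end_def)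
    ultimately show ?thesis by (auto dest: eventually_happens')
  qed
  have "q \<in> z ` ?S" for q
  proof -
    obtain t1 t2 where "t1 \<in> ?S" "z t1 \<le> q" "t2 \<in> ?S" "q \<le> z t2"
      using below above by blast
    with interval show ?thesis
      unfolding is_interval_1 by blast
  qed
  then show ?thesis by auto
qed

lemma orbit_heteroclinic:
  assumes xi: "xi > 0" and het: "heteroclinic xi a b y z"
  shows "orbit a b y z = {(p, q). H xi p q = 1}"
proof -
  have "orbit a b y z = (\<lambda>t. (level_one_y xi (z t), z t)) ` time_int a b"
    unfolding orbit_def using heteroclinic_H_eq_1[OF xi het] H_eq_1_iff[OF xi] by (auto intro!: image_cong)
  also have "\<dots> = (\<lambda>q. (level_one_y xi q, q)) ` z ` time_int a b"
    by (simp add: image_image)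
  also have "\<dots> = {(p, q). H xi p q = 1}"
    using heteroclinic_z_surj[OF het] H_eq_1_iff[OF xi] by auto
  finally show ?thesis .
qed

section \<open>The two branches of the level set\<close>

definition z_minus :: "real \<Rightarrow> real \<Rightarrow> real" where
  "z_minus xi = the_inv_into {0..} (level_one_y xi)"

definition z_plus :: "real \<Rightarrow> real \<Rightarrow> real" where
  "z_plus xi p = - the_inv_into {0..} (\<lambda>w. level_one_y xi (- w)) p"

lemma z_minus_branch:
  shows "\<And>p. - 1 / xi \<le> p \<Longrightarrow> 0 \<le> z_minus xi p \<and> level_one_y xi (z_minus xi p) = p"
    and "\<And>q. 0 \<le> q \<Longrightarrow> z_minus xi (level_one_y xi q) = q"
    and "continuous_on {- 1 / xi..} (z_minus xi)"
    and "tends_to_Q3 at_top (\<lambda>p. p) (z_minus xi)"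
proof -
  let ?f = "level_one_y xi"
  have cont: "continuous_on {0..} ?f"
    by (intro continuous_intros)
  have mono: "strict_mono_on {0..} ?f" by (rule strict_mono_on_level_one_y)
  have lim: "filterlim ?f at_top at_top"
    unfolding level_one_y_def by real_asymp
  have inj: "inj_on ?f {0..}" using mono by (rule strict_mono_on_imp_inj_on)
  have img: "?f ` {0..} = {- 1 / xi..}"
    using image_atLeast_strict_mono_on[OF cont mono lim] by simp
  show inv: "0 \<le> z_minus xi p \<and> ?f (z_minus xi p) = p" if "- 1 / xi \<le> p" for p
    using that img the_inv_into_into[OF inj, of p] f_the_inv_into_f[OF inj, of p]
    by (auto simp: z_minus_def)
  show "z_minus xi (?f q) = q" if "0 \<le> q" for q
    using the_inv_into_f_f[OF inj] that by (simp add: z_minus_def)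
  show "continuous_on {- 1 / xi..} (z_minus xi)"
    using continuous_on_the_inv_into_atLeast[OF cont mono lim] by (simp add: z_minus_def)
  have z_lim: "filterlim (z_minus xi) at_top at_top"
    unfolding z_minus_def by (rule filterlim_the_inv_into_atLeast[OF cont mono lim])
  have "eventually (\<lambda>p. ?f (z_minus xi p) = p) at_top"
    using eventually_ge_at_top[of "- 1 / xi"] by eventually_elim (simp add: inv)
  moreover have "((\<lambda>x. ?f x / x) \<longlongrightarrow> 1) at_top"
    unfolding level_one_y_def by real_asymp
  ultimately have "((\<lambda>p. p / z_minus xi p) \<longlongrightarrow> 1) at_top"
    by (rule tendsto_right_inverse_at_top[OF z_lim, where \<phi> = "\<lambda>p z. p / z"])
  moreover have "eventually (\<lambda>p. z_minus xi p > 0) at_top"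
    using z_lim by (simp add: filterlim_at_top_dense)
  moreover have "((\<lambda>p. 1 / z_minus xi p) \<longlongrightarrow> 0) at_top"
    using tendsto_inverse_0_at_top[OF z_lim] by (simp add: inverse_eq_divide)
  ultimately show "tends_to_Q3 at_top (\<lambda>p. p) (z_minus xi)"
    by (simp add: tends_to_Q3_def)
qed

lemma z_plus_branch:
  shows "\<And>p. - 1 / xi \<le> p \<Longrightarrow> z_plus xi p \<le> 0 \<and> level_one_y xi (z_plus xi p) = p"
    and "\<And>q. q \<le> 0 \<Longrightarrow> z_plus xi (level_one_y xi q) = q"
    and "continuous_on {- 1 / xi..} (z_plus xi)"
    and "tends_to_Q6 at_top (\<lambda>p. p) (z_plus xi)"
proof -
  let ?f = "\<lambda>w. level_one_y xi (- w)" and ?h = "the_inv_into {0..} (\<lambda>w. level_one_y xi (- w))"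
  have cont: "continuous_on {0..} ?f"
    by (intro continuous_intros)
  have mono: "strict_mono_on {0..} ?f" by (rule strict_mono_on_level_one_y_minus)
  have lim: "filterlim ?f at_top at_top"
    unfolding level_one_y_def by real_asymp
  have inj: "inj_on ?f {0..}" using mono by (rule strict_mono_on_imp_inj_on)
  have img: "?f ` {0..} = {- 1 / xi..}"
    using image_atLeast_strict_mono_on[OF cont mono lim] by simp
  have inv: "0 \<le> ?h p \<and> ?f (?h p) = p" if "- 1 / xi \<le> p" for p
    using that img the_inv_into_into[OF inj, of p] f_the_inv_into_f[OF inj, of p] by auto
  then show "z_plus xi p \<le> 0 \<and> level_one_y xi (z_plus xi p) = p" if "- 1 / xi \<le> p" for p
    using that by (simp add: z_plus_def)
  show "z_plus xi (level_one_y xi q) = q" if "q \<le> 0" for q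
    using the_inv_into_f_f[OF inj, of "- q"] that by (simp add: z_plus_def)
  show "continuous_on {- 1 / xi..} (z_plus xi)"
    using continuous_on_the_inv_into_atLeast[OF cont mono lim]
    unfolding z_plus_def by (intro continuous_intros) simp
  have h_lim: "filterlim ?h at_top at_top"
    by (rule filterlim_the_inv_into_atLeast[OF cont mono lim])
  have "eventually (\<lambda>p. ?f (?h p) = p) at_top"
    using eventually_ge_at_top[of "- 1 / xi"] by eventually_elim (simp add: inv)
  moreover have "((\<lambda>x. exp x / ?f x) \<longlongrightarrow> 1) at_top"
    unfolding level_one_y_def by real_asymp
  ultimately have "((\<lambda>p. exp (?h p) / p) \<longlongrightarrow> 1) at_top"
    by (rule tendsto_right_inverse_at_top[OF h_lim, where \<phi> = "\<lambda>p w. exp w / p"])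
  moreover have "eventually (\<lambda>p. ?h p > 0 \<and> p > 0) at_top"
    using h_lim by (simp add: filterlim_at_top_dense eventually_conj eventually_gt_at_top)
  moreover have "((\<lambda>p. 1 / ?h p) \<longlongrightarrow> 0) at_top"
    using tendsto_inverse_0_at_top[OF h_lim] by (simp add: inverse_eq_divide)
  ultimately show "tends_to_Q6 at_top (\<lambda>p. p) (z_plus xi)"
    by (simp add: tends_to_Q6_def z_plus_def)
qed

lemma H_level_one_eq_graphs:
  assumes xi: "xi > 0"
  shows "{(p, q). H xi p q = 1} =
    {(p, z_minus xi p) | p. p \<ge> - 1 / xi} \<union> {(p, z_plus xi p) | p. p \<ge> - 1 / xi}"
proof (intro equalityI subsetI)
  fix x assume "x \<in> {(p, q). H xi p q = 1}"
  then obtain q where x: "x = (level_one_y xi q, q)"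
    using H_eq_1_iff[OF xi] by auto
  show "x \<in> {(p, z_minus xi p) | p. p \<ge> - 1 / xi} \<union> {(p, z_plus xi p) | p. p \<ge> - 1 / xi}"
  proof (cases "q \<ge> 0")
    case True
    then have "x = (level_one_y xi q, z_minus xi (level_one_y xi q))"
      using x z_minus_branch(2) by simp
    then show ?thesis using level_one_y_ge by blast
  next
    case False
    then have "x = (level_one_y xi q, z_plus xi (level_one_y xi q))"
      using x z_plus_branch(2) by simp
    then show ?thesis using level_one_y_ge by blast
  qed
next
  fix x assume "x \<in> {(p, z_minus xi p) | p. p \<ge> - 1 / xi} \<union> {(p, z_plus xi p) | p. p \<ge> - 1 / xi}"
  then show "x \<in> {(p, q). H xi p q = 1}"
    using z_minus_branch(1) z_plus_branch(1) H_eq_1_iff[OF xi] by fastforce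
qed

theorem lemma3:
  fixes xi :: real
  assumes "xi > 0"
  shows "(\<exists>a b y z. heteroclinic xi a b y z) \<and>
         (\<forall>a b y z. heteroclinic xi a b y z \<longrightarrow> orbit a b y z = {(p, q). H xi p q = 1}) \<and>
         (\<exists>zm zp :: real \<Rightarrow> real.
            {(p, q). H xi p q = 1} = {(p, zm p) | p. p \<ge> - 1 / xi} \<union> {(p, zp p) | p. p \<ge> - 1 / xi} \<and>
            continuous_on {- 1 / xi..} zm \<and> continuous_on {- 1 / xi..} zp \<and>
            tends_to_Q3 at_top (\<lambda>p. p) zm \<and> zm \<in> O(\<lambda>p. p) \<and>
            tends_to_Q6 at_top (\<lambda>p. p) zp \<and> zp \<in> O(\<lambda>p. ln p))"
proof (intro conjI allI impI exI)
  show "heteroclinic xi (-\<infinity>) 0 (\<lambda>t. - ln (- t) - t - 1 - 1 / xi) (\<lambda>t. - ln (- t))"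
    using assms by (rule heteroclinic_explicit)
  show "orbit a b y z = {(p, q). H xi p q = 1}" if "heteroclinic xi a b y z" for a b y z
    using assms that by (rule orbit_heteroclinic)
  show "{(p, q). H xi p q = 1} =
      {(p, z_minus xi p) | p. p \<ge> - 1 / xi} \<union> {(p, z_plus xi p) | p. p \<ge> - 1 / xi}"
    using assms by (rule H_level_one_eq_graphs)
  show "z_minus xi \<in> O(\<lambda>p. p)" and "z_plus xi \<in> O(\<lambda>p. ln p)"
    using tends_to_Q3_imp_bigo[OF z_minus_branch(4)] tends_to_Q6_imp_bigo_ln[OF z_plus_branch(4)] by simp_all
qed (fact z_minus_branch z_plus_branch)+

end
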